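(* Let $d\ge 2$ and $n\ge 2$ be integers, let $k\ge0$ be such that $n_k\le n<n_{k+1}$, let $\lambda(n)=(l_{k+1},l_k,\ldots,l_0)$, and set $\lambda_i(n)=l_0+l_1d+\cdots+l_{i-1}d^{i-1}$ (so $\lambda_0(n)=0$). Then $$W(D_{n,d};q)=\sum_{i=0}^k d^i(n-n_i+1)q^{2i+1}+\sum_{i=0}^{k'}\left(d^{2i}\left\lfloor\frac{n-m_i}{d^{i+1}}\right\rfloor\binom{d+1}{2}+d^{2i}\binom{l_i+1}{2}+d^i(l_i+1)(\lambda_i(n)+1)\right)q^{2i+2},$$ where $k'=k-1$ if $n_k\le n<m_k$ and $k'=k$ if $m_k\le n<n_{k+1}$.
   Context: For a connected graph $G$, $W(G;q)=\sum_{\{u,v\}}q^{d(u,v)}$ over unordered pairs of distinct vertices, $d$ the graph distance. The $d$-ary dendrimer $D_{n,d}$ is the tree on vertex set $\{1,\ldots,n\}$ defined inductively: $D_{1,d}$ is the single vertex $1$, and $D_{n,d}$ is obtained from $D_{n-1,d}$ by attaching a new leaf $n$ to the smallest-numbered vertex of $D_{n-1,d}$ having degree $\le d$. Define $n_k=2+(d+1)\frac{d^k-1}{d-1}$ and $m_k=3+2d\frac{d^k-1}{d-1}$ for $k\ge0$. For a vertex $m$ with $n_k\le m<n_{k+1}$, its label is $\lambda(m)=(l_{k+1},l_k,\ldots,l_0)$ where $0\le l_i<d$ and $\sum_{i=0}^{k+1}l_id^i=m-n_k+(d-1)d^k$. *)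

theory Defs
  imports Main
begin

(* Undirected graph given by a set of (oriented) edges; adjacency is symmetric. *)
definition adj :: "(nat \<times> nat) set \<Rightarrow> (nat \<times> nat) set" where
  "adj E = E \<union> E\<inverse>"

definition deg :: "(nat \<times> nat) set \<Rightarrow> nat \<Rightarrow> nat" where
  "deg E v = card {u. (u, v) \<in> adj E}"

fun dend_edges :: "nat \<Rightarrow> nat \<Rightarrow> (nat \<times> nat) set" where
  "dend_edges d 0 = {}"
| "dend_edges d (Suc n) =
     (if n = 0 then {}
      else insert (LEAST v. 1 \<le> v \<and> v \<le> n \<and> deg (dend_edges d n) v \<le> d, Suc n)
                  (dend_edges d n))"

definition gdist :: "(nat \<times> nat) set \<Rightarrow> nat \<Rightarrow> nat \<Rightarrow> nat" where
  "gdist E u v = (LEAST k. (u, v) \<in> (adj E) ^^ k)"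

definition wiener :: "nat \<Rightarrow> (nat \<times> nat) set \<Rightarrow> 'a::comm_ring_1 \<Rightarrow> 'a" where
  "wiener n E q = (\<Sum>u\<in>{1..n}. \<Sum>v\<in>{u<..n}. q ^ gdist E u v)"

definition nk :: "nat \<Rightarrow> nat \<Rightarrow> nat" where
  "nk d k = 2 + (d + 1) * ((d ^ k - 1) div (d - 1))"

definition mk :: "nat \<Rightarrow> nat \<Rightarrow> nat" where
  "mk d k = 3 + 2 * d * ((d ^ k - 1) div (d - 1))"

(* label digits: lambda(m) = (l_{k+1},...,l_0), sum l_i d^i = m - n_k + (d-1) d^k *)
definition label_digit :: "nat \<Rightarrow> nat \<Rightarrow> nat \<Rightarrow> nat \<Rightarrow> nat" where
  "label_digit d k m i = ((m - nk d k + (d - 1) * d ^ k) div d ^ i) mod d"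

definition label_low :: "nat \<Rightarrow> nat \<Rightarrow> nat \<Rightarrow> nat \<Rightarrow> nat" where
  "label_low d k m i = (\<Sum>j<i. label_digit d k m j * d ^ j)"

end

theory Submission
  imports Defs
begin

(*
  The vertices of D_{n,d} are added in increasing order, so W(D_{n,d}; q) is the sum over
  v <= n of P(v) = sum_{u < v} q^dist(u,v).  Every vertex m >= 3 has the parent
  (m - 3) div d + 1 < m, so each u < v reaches v through the parent p of v.  The vertices
  u < v are those below the first child of p, namely 1 and the children of 1, ..., p - 1,
  together with the t = (v - 3) mod d older siblings of v; this gives
      P(v) = q + (t + 1) q^2 + d q^2 P(p)      for v >= d + 3,
  and P(v) = q + (v - 2) q^2 for the children 2, ..., d + 2 of the root.  Unfolding the
  recursion along the ancestors of v, the coefficient of q^(2i+1) in P(v) is d^i once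
  v >= n_i, and that of q^(2i+2) is d^i (l + 1) once v >= m_i, where l is the i-th base-d
  digit of v - m_i.  Summed over v <= n, the odd coefficients count vertices, and the even
  ones are digit sums over 0 <= x <= n - m_i, which split into complete blocks of length
  d^(i+1) and a final partial block.  The low digits of n - m_i are those of the label
  lambda(n), because the two numbers differ by a multiple of d^(i+1).
*)

section \<open>The dendrimer as a parent-labelled tree\<close>

(* The children of v are first_child d v, ..., first_child d v + d - 1; the root 1 has the
   extra child 2.  The values parent d 0 = parent d 1 = 1 are junk. *)
definition parent :: "nat \<Rightarrow> nat \<Rightarrow> nat" where
  "parent d m = (m - 3) div d + 1"

definition first_child :: "nat \<Rightarrow> nat \<Rightarrow> nat" where
  "first_child d v = d * (v - 1) + 3"

lemma parent_pos [simp]: "0 < parent d m"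
  by (simp add: parent_def)

lemma parent_less: "2 \<le> m \<Longrightarrow> parent d m < m"
  using div_le_dividend[of "m - 3" d] unfolding parent_def by linarith

lemma parent_one: "parent d 1 = 1"
  by (simp add: parent_def)

lemma parent_eq_1_iff: "0 < d \<Longrightarrow> parent d m = 1 \<longleftrightarrow> m \<le> d + 2"
  by (auto simp: parent_def div_eq_0_iff)

lemma first_child_Suc: "0 < v \<Longrightarrow> first_child d (Suc v) = first_child d v + d"
  by (cases v) (simp_all add: first_child_def)

lemma less_first_child: "0 < d \<Longrightarrow> v < first_child d v"
proof -
  assume "0 < d"
  then have "v - 1 \<le> d * (v - 1)" by simp
  then show ?thesis unfolding first_child_def by linarith
qed

lemma parent_eq_iff:
  assumes d: "0 < d" and m: "3 \<le> m"
  shows "parent d m = v \<longleftrightarrow> first_child d v \<le> m \<and> m < first_child d (Suc v)"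
proof (cases v)
  case (Suc w)
  have "parent d m = v \<longleftrightarrow> w \<le> (m - 3) div d \<and> (m - 3) div d < Suc w"
    using Suc by (auto simp: parent_def)
  also have "\<dots> \<longleftrightarrow> w * d \<le> m - 3 \<and> m - 3 < Suc w * d"
    using d by (simp add: less_eq_div_iff_mult_less_eq div_less_iff_less_mult)
  also have "\<dots> \<longleftrightarrow> first_child d v \<le> m \<and> m < first_child d (Suc v)"
    using m Suc by (auto simp: first_child_def mult.commute)
  finally show ?thesis .
qed (use m in \<open>simp add: first_child_def\<close>)

lemma first_child_le_iff:
  assumes "0 < d" "3 \<le> m" "0 < v"
  shows "first_child d v \<le> m \<longleftrightarrow> v \<le> parent d m"
proof -
  have "first_child d v \<le> m \<longleftrightarrow> (v - 1) * d \<le> m - 3"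
    using assms by (auto simp: first_child_def mult.commute)
  also have "\<dots> \<longleftrightarrow> v - 1 \<le> (m - 3) div d"
    using assms(1) by (simp add: less_eq_div_iff_mult_less_eq)
  also have "\<dots> \<longleftrightarrow> v \<le> parent d m"
    by (auto simp: parent_def)
  finally show ?thesis .
qed

lemma diff_first_child_div:
  assumes "0 < d" "0 < v" "first_child d v \<le> m"
  shows "(m - first_child d v) div d = parent d m - v"
proof -
  have "m - 3 = (m - first_child d v) + (v - 1) * d"
    using assms(3) by (simp add: first_child_def mult.commute)
  then have "(m - 3) div d = (m - first_child d v) div d + (v - 1)"
    using assms(1) by simp
  then show ?thesis
    using assms(2) by (simp add: parent_def)
qed

lemma first_child_ge: "2 \<le> x \<Longrightarrow> d + 3 \<le> first_child d x"
proof -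
  assume "2 \<le> x"
  then have "d * 1 \<le> d * (x - 1)" by (intro mult_le_mono2) simp
  then show ?thesis by (simp add: first_child_def)
qed

definition parent_edges :: "nat \<Rightarrow> nat \<Rightarrow> (nat \<times> nat) set" where
  "parent_edges d n = {(parent d m, m) | m. 2 \<le> m \<and> m \<le> n}"

definition tree_neighbours :: "nat \<Rightarrow> nat \<Rightarrow> nat set" where
  "tree_neighbours d v =
     insert (if v = 1 then 2 else parent d v) {first_child d v..<first_child d (Suc v)}"

lemma finite_tree_neighbours [simp]: "finite (tree_neighbours d v)"
  by (simp add: tree_neighbours_def)

lemma parent_neighbour_less:
  "0 < d \<Longrightarrow> 0 < v \<Longrightarrow> (if v = 1 then 2 else parent d v) < first_child d v"
  using parent_less[of v d] less_first_child[of d v] by (auto simp: first_child_def)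

lemma card_tree_neighbours: "0 < d \<Longrightarrow> 0 < v \<Longrightarrow> card (tree_neighbours d v) = Suc d"
  using parent_neighbour_less[of d v] by (simp add: tree_neighbours_def first_child_Suc)

lemma tree_neighbours_less:
  assumes "0 < d" "0 < v" "u \<in> tree_neighbours d v"
  shows "u < first_child d (Suc v)"
proof -
  have "first_child d v \<le> first_child d (Suc v)"
    using assms(2) by (simp add: first_child_Suc)
  then show ?thesis
    using assms parent_neighbour_less[of d v] by (auto simp: tree_neighbours_def)
qed

lemma neighbours_parent_edges:
  assumes d: "0 < d" and v: "0 < v" "v \<le> n"
  shows "{u. (u, v) \<in> adj (parent_edges d n)} = tree_neighbours d v \<inter> {..n}"
proof -
  have children: "2 \<le> u \<and> parent d u = v \<longleftrightarrow>
      u \<in> {first_child d v..<first_child d (Suc v)} \<or> (v = 1 \<and> u = 2)" for u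
  proof (cases "3 \<le> u")
    case True
    then show ?thesis using parent_eq_iff[OF d True] by auto
  next
    case False
    then have "parent d u = 1" by (simp add: parent_def)
    with False show ?thesis by (auto simp: first_child_def)
  qed
  have "{u. (u, v) \<in> adj (parent_edges d n)}
      = {u. u \<le> n \<and> (2 \<le> v \<and> u = parent d v \<or> 2 \<le> u \<and> parent d u = v)}"
    using v parent_less[of v d] by (auto simp: adj_def parent_edges_def)
  also have "\<dots> = tree_neighbours d v \<inter> {..n}"
    unfolding children using v by (auto simp: tree_neighbours_def)
  finally show ?thesis .
qed

lemma deg_parent_edges:
  "0 < d \<Longrightarrow> 0 < v \<Longrightarrow> v \<le> n \<Longrightarrow>
    deg (parent_edges d n) v = card (tree_neighbours d v \<inter> {..n})"
  by (simp add: deg_def neighbours_parent_edges)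

lemma least_unsaturated_vertex:
  assumes d: "0 < d" and n: "0 < n"
  shows "(LEAST v. 1 \<le> v \<and> v \<le> n \<and> deg (parent_edges d n) v \<le> d) = parent d (Suc n)"
proof (rule Least_equality)
  define p where "p = parent d (Suc n)"
  have "p \<le> n"
    using parent_less[of "Suc n" d] n by (cases "n = 1") (auto simp: p_def)
  moreover have "Suc n \<in> tree_neighbours d p"
  proof (cases "n = 1")
    case False
    then have "3 \<le> Suc n" using n by simp
    then show ?thesis using parent_eq_iff[OF d, of "Suc n" p] by (simp add: p_def tree_neighbours_def)
  qed (simp add: p_def tree_neighbours_def parent_def)
  then have "card (tree_neighbours d p \<inter> {..n}) \<le> card (tree_neighbours d p - {Suc n})"
    by (intro card_mono) auto
  then have "card (tree_neighbours d p \<inter> {..n}) \<le> d"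
    using card_tree_neighbours[OF d, of p] \<open>Suc n \<in> tree_neighbours d p\<close> by (simp add: p_def)
  ultimately show "1 \<le> p \<and> p \<le> n \<and> deg (parent_edges d n) p \<le> d"
    using d by (simp add: p_def deg_parent_edges Suc_le_eq)
next
  fix v assume v: "1 \<le> v \<and> v \<le> n \<and> deg (parent_edges d n) v \<le> d"
  show "parent d (Suc n) \<le> v"
  proof (rule ccontr)
    assume "\<not> parent d (Suc n) \<le> v"
    moreover have "3 \<le> Suc n"
      using calculation v by (cases "n = 1") (auto simp: parent_def)
    ultimately have "first_child d (Suc v) \<le> Suc n"
      using first_child_le_iff[OF d, of "Suc n" "Suc v"] by simp
    then have "tree_neighbours d v \<subseteq> {..n}"
      using tree_neighbours_less[OF d, of v] v by fastforce
    then have "deg (parent_edges d n) v = Suc d"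
      using v d by (simp add: deg_parent_edges card_tree_neighbours Int_absorb2)
    with v show False by simp
  qed
qed

lemma dend_edges_eq_parent_edges: "0 < d \<Longrightarrow> dend_edges d n = parent_edges d n"
proof (induction n)
  case (Suc n)
  show ?case
  proof (cases "n = 0")
    case False
    then have "dend_edges d (Suc n) = insert (parent d (Suc n), Suc n) (parent_edges d n)"
      using Suc least_unsaturated_vertex[of d n] by simp
    also have "\<dots> = parent_edges d (Suc n)"
      using False by (auto simp: parent_edges_def le_Suc_eq)
    finally show ?thesis .
  qed (simp add: parent_edges_def)
qed (simp add: parent_edges_def)

section \<open>Tree distance\<close>

(* A parent has a smaller label than its children, so moving the larger endpoint to its parent
   follows the tree path; the cases u = 0 and v = 0 only serve termination. *)
function tree_dist :: "nat \<Rightarrow> nat \<Rightarrow> nat \<Rightarrow> nat" where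
  "tree_dist d u v =
     (if u = v \<or> u = 0 \<or> v = 0 then 0
      else if u < v then Suc (tree_dist d u (parent d v))
      else Suc (tree_dist d (parent d u) v))"
  by auto
termination
  by (relation "measure (\<lambda>(d, u, v). u + v)") (auto intro: parent_less)

declare tree_dist.simps [simp del]

lemma tree_dist_self [simp]: "tree_dist d u u = 0"
  by (simp add: tree_dist.simps)

lemma tree_dist_less: "0 < u \<Longrightarrow> u < v \<Longrightarrow> tree_dist d u v = Suc (tree_dist d u (parent d v))"
  by (subst tree_dist.simps) auto

lemma tree_dist_greater: "0 < v \<Longrightarrow> v < u \<Longrightarrow> tree_dist d u v = Suc (tree_dist d (parent d u) v)"
  by (subst tree_dist.simps) auto

lemma tree_dist_commute: "tree_dist d u v = tree_dist d v u"
proof (induction d u v rule: tree_dist.induct)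
  case (1 d u v)
  then show ?case
    by (cases u v rule: linorder_cases) (auto simp: tree_dist.simps[of d u v] tree_dist.simps[of d v u])
qed

inductive ancestor :: "nat \<Rightarrow> nat \<Rightarrow> nat \<Rightarrow> bool" for d where
  ancestor_refl: "ancestor d u u"
| ancestor_step: "2 \<le> x \<Longrightarrow> ancestor d u (parent d x) \<Longrightarrow> ancestor d u x"

lemma ancestor_le: "ancestor d u x \<Longrightarrow> u \<le> x"
proof (induction rule: ancestor.induct)
  case (ancestor_step x)
  then show ?case using parent_less[of x d] by simp
qed simp

lemma ancestor_parent: "ancestor d c x \<Longrightarrow> 2 \<le> c \<Longrightarrow> ancestor d (parent d c) x"
proof (induction rule: ancestor.induct)
  case ancestor_refl
  then show ?case by (rule ancestor_step[OF _ ancestor.ancestor_refl])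
next
  case (ancestor_step x)
  then show ?case by (simp add: ancestor.ancestor_step)
qed

lemma tree_dist_parent_non_ancestor:
  "2 \<le> m \<Longrightarrow> 0 < w \<Longrightarrow> \<not> ancestor d m w \<Longrightarrow>
    tree_dist d w m = Suc (tree_dist d w (parent d m))"
proof (induction w rule: less_induct)
  case (less w)
  consider "w < m" | "m < w"
    using less.prems(3) ancestor_refl by (metis linorder_neqE_nat)
  then show ?case
  proof cases
    case 1
    then show ?thesis using less.prems by (simp add: tree_dist_less)
  next
    case 2
    have "2 \<le> w" using 2 less.prems(1) by simp
    then have "\<not> ancestor d m (parent d w)"
      using less.prems(3) ancestor_step by blast
    then have "tree_dist d (parent d w) m = Suc (tree_dist d (parent d w) (parent d m))"
      using less.IH[of "parent d w"] less.prems(1) parent_less[OF \<open>2 \<le> w\<close>] by simp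
    moreover have "parent d m < w"
      using parent_less[of m d] 2 less.prems(1) by simp
    ultimately show ?thesis
      using 2 less.prems by (simp add: tree_dist_greater)
  qed
qed

lemma tree_dist_parent_ancestor:
  "ancestor d m w \<Longrightarrow> 2 \<le> m \<Longrightarrow> tree_dist d w (parent d m) = Suc (tree_dist d w m)"
proof (induction rule: ancestor.induct)
  case (ancestor_refl m)
  then show ?case using parent_less[of m d] by (simp add: tree_dist_greater)
next
  case (ancestor_step x m)
  have "m \<le> parent d x" using ancestor_step.hyps(2) by (rule ancestor_le)
  moreover have "parent d m < m" using parent_less ancestor_step.prems .
  ultimately show ?case
    using ancestor_step parent_less[of x d] by (simp add: tree_dist_greater)
qed

lemma tree_dist_edge:
  "2 \<le> m \<Longrightarrow> 0 < w \<Longrightarrow> tree_dist d w m = Suc (tree_dist d w (parent d m))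
     \<or> tree_dist d w (parent d m) = Suc (tree_dist d w m)"
  using tree_dist_parent_non_ancestor[of m w d] tree_dist_parent_ancestor[of d m w] by blast

lemma tree_dist_walk:
  "0 < u \<Longrightarrow> u \<le> n \<Longrightarrow> 0 < v \<Longrightarrow> v \<le> n \<Longrightarrow>
    (u, v) \<in> adj (parent_edges d n) ^^ tree_dist d u v"
proof (induction d u v rule: tree_dist.induct)
  case (1 d u v)
  have edge: "(parent d m, m) \<in> adj (parent_edges d n)" "(m, parent d m) \<in> adj (parent_edges d n)"
    if "2 \<le> m" "m \<le> n" for m
    using that by (auto simp: adj_def parent_edges_def)
  consider "u = v" | "u < v" | "v < u" by linarith
  then show ?case
  proof cases
    case 2
    then have "2 \<le> v" using "1.prems"(1) by simp
    then have "(u, parent d v) \<in> adj (parent_edges d n) ^^ tree_dist d u (parent d v)"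
      using 1 2 parent_less[of v d] by simp
    then show ?thesis
      using 2 "1.prems" edge(1)[OF \<open>2 \<le> v\<close>] by (auto simp: tree_dist_less)
  next
    case 3
    then have "2 \<le> u" using "1.prems"(3) by simp
    then have "(parent d u, v) \<in> adj (parent_edges d n) ^^ tree_dist d (parent d u) v"
      using 1 3 parent_less[of u d] by simp
    from relpow_Suc_I2[OF edge(2)[OF \<open>2 \<le> u\<close> \<open>u \<le> n\<close>] this] show ?thesis
      using 3 "1.prems" by (simp add: tree_dist_greater)
  qed simp
qed

lemma tree_dist_le_walk:
  "(u, v) \<in> adj (parent_edges d n) ^^ k \<Longrightarrow> 0 < u \<Longrightarrow> tree_dist d u v \<le> k"
proof (induction k arbitrary: v)
  case (Suc k)
  then obtain w where "(u, w) \<in> adj (parent_edges d n) ^^ k" "(w, v) \<in> adj (parent_edges d n)"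
    by auto
  moreover from this(2) obtain m where "2 \<le> m" "(w, v) = (parent d m, m) \<or> (w, v) = (m, parent d m)"
    by (auto simp: adj_def parent_edges_def)
  ultimately show ?case
    using Suc tree_dist_edge[of m u d] by fastforce
qed simp

lemma gdist_parent_edges:
  "0 < u \<Longrightarrow> u \<le> n \<Longrightarrow> 0 < v \<Longrightarrow> v \<le> n \<Longrightarrow>
    gdist (parent_edges d n) u v = tree_dist d u v"
  unfolding gdist_def by (rule Least_equality) (auto intro: tree_dist_walk dest: tree_dist_le_walk)

section \<open>Distance polynomials\<close>

lemma tree_dist_parent: "2 \<le> u \<Longrightarrow> tree_dist d u (parent d u) = 1"
  using parent_less[of u d] by (simp add: tree_dist_greater)

lemma tree_dist_siblings:
  assumes "2 \<le> u" "2 \<le> x" "u \<noteq> x" "parent d u = parent d x"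
  shows "tree_dist d u x = 2"
proof (cases "u < x")
  case True
  then show ?thesis
    using assms tree_dist_parent[of u d] by (simp add: tree_dist_less)
next
  case False
  have "tree_dist d (parent d x) x = 1"
    using assms(2) tree_dist_parent[of x d] by (simp add: tree_dist_commute)
  with False show ?thesis
    using assms by (simp add: tree_dist_greater)
qed

lemma parent_in_block:
  "0 < d \<Longrightarrow> c \<in> {first_child d v..<first_child d (Suc v)} \<Longrightarrow> 3 \<le> c \<and> parent d c = v"
  using parent_eq_iff[of d c v] by (auto simp: first_child_def)

definition dist_poly :: "nat \<Rightarrow> 'a::comm_ring_1 \<Rightarrow> nat \<Rightarrow> nat \<Rightarrow> 'a" where
  "dist_poly d q x m = (\<Sum>u\<in>{1..<m}. q ^ tree_dist d u x)"

lemma dist_poly_Suc: "0 < m \<Longrightarrow> dist_poly d q x (Suc m) = dist_poly d q x m + q ^ tree_dist d m x"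
  by (simp add: dist_poly_def sum.atLeastLessThan_Suc)

lemma dist_poly_two: "dist_poly d q x 2 = q ^ tree_dist d 1 x"
  using dist_poly_Suc[of 1 d q x] by (simp add: dist_poly_def numeral_2_eq_2)

lemma dist_poly_split:
  "0 < a \<Longrightarrow> a \<le> b \<Longrightarrow>
    dist_poly d q x b = dist_poly d q x a + (\<Sum>u\<in>{a..<b}. q ^ tree_dist d u x)"
  by (simp add: dist_poly_def sum.atLeastLessThan_concat)

lemma dist_poly_parent: "m \<le> x \<Longrightarrow> dist_poly d q x m = q * dist_poly d q (parent d x) m"
  unfolding dist_poly_def sum_distrib_left
  by (intro sum.cong) (auto simp: tree_dist_less)

lemma sum_dist_siblings:
  fixes q :: "'a::comm_ring_1"
  assumes "finite B" "x \<in> B" "\<And>c. c \<in> B \<Longrightarrow> 2 \<le> c \<and> parent d c = parent d x"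
  shows "(\<Sum>c\<in>B. q ^ tree_dist d c x) = 1 + of_nat (card B - 1) * q\<^sup>2"
proof -
  have "(\<Sum>c\<in>B - {x}. q ^ tree_dist d c x) = (\<Sum>c\<in>B - {x}. q\<^sup>2)"
  proof (rule sum.cong)
    fix c assume "c \<in> B - {x}"
    then show "q ^ tree_dist d c x = q\<^sup>2"
      using assms(3)[of c] assms(3)[OF assms(2)] tree_dist_siblings[of c x d] by simp
  qed simp
  then show ?thesis
    using assms by (simp add: sum.remove)
qed

lemma sum_dist_children:
  fixes q :: "'a::comm_ring_1"
  assumes "finite B" "\<And>c. c \<in> B \<Longrightarrow> 2 \<le> c \<and> parent d c = x"
  shows "(\<Sum>c\<in>B. q ^ tree_dist d c x) = of_nat (card B) * q"
proof -
  have "(\<Sum>c\<in>B. q ^ tree_dist d c x) = (\<Sum>c\<in>B. q)"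
  proof (rule sum.cong)
    fix c assume "c \<in> B"
    with assms(2)[of c] show "q ^ tree_dist d c x = q"
      using tree_dist_parent[of c d] by auto
  qed simp
  then show ?thesis by simp
qed

lemma dist_poly_first_child_Suc:
  fixes q :: "'a::comm_ring_1"
  assumes d: "0 < d" and x: "0 < x" and m: "parent d x < m"
    and IH: "dist_poly d q x (first_child d m) = 1 + q + of_nat d * q * dist_poly d q x m"
  shows "dist_poly d q x (first_child d (Suc m)) = 1 + q + of_nat d * q * dist_poly d q x (Suc m)"
proof -
  have m0: "0 < m" using m by simp
  have late: "tree_dist d c x = Suc (tree_dist d m x)"
    if c: "c \<in> {first_child d m..<first_child d (Suc m)}" for c
  proof -
    have c3: "3 \<le> c" and pc: "parent d c = m" using parent_in_block[OF d c] by auto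
    have "\<not> ancestor d c x"
    proof
      assume "ancestor d c x"
      then have "ancestor d m x" using ancestor_parent[of d c x] c3 pc by simp
      moreover have "m < x"
        using ancestor_le[OF \<open>ancestor d c x\<close>] c less_first_child[OF d, of m] by simp
      ultimately have "m \<le> parent d x"
        by (cases rule: ancestor.cases) (auto dest: ancestor_le)
      with m show False by simp
    qed
    then show ?thesis
      using tree_dist_parent_non_ancestor[of c x d] c3 x pc by (simp add: tree_dist_commute)
  qed
  have "dist_poly d q x (first_child d (Suc m)) = dist_poly d q x (first_child d m)
      + (\<Sum>c\<in>{first_child d m..<first_child d (Suc m)}. q ^ tree_dist d c x)"
    using m0 by (intro dist_poly_split) (simp_all add: first_child_def first_child_Suc)
  also have "(\<Sum>c\<in>{first_child d m..<first_child d (Suc m)}. q ^ tree_dist d c x)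
      = of_nat d * q * q ^ tree_dist d m x"
    using late m0 by (simp add: first_child_Suc)
  finally show ?thesis
    using IH m0 by (simp add: dist_poly_Suc algebra_simps)
qed

lemma root_children: "0 < d \<Longrightarrow> c \<in> {2..<d + 3} \<Longrightarrow> 2 \<le> c \<and> parent d c = 1"
  using parent_eq_1_iff[of d c] by simp

lemma dist_poly_first_child_root:
  fixes q :: "'a::comm_ring_1"
  assumes d: "0 < d"
  shows "dist_poly d q 1 (first_child d 2) = 1 + q + of_nat d * q * dist_poly d q 1 2"
proof -
  have "dist_poly d q 1 (d + 3) = dist_poly d q 1 2 + (\<Sum>c\<in>{2..<d + 3}. q ^ tree_dist d c 1)"
    by (rule dist_poly_split) simp_all
  also have "\<dots> = 1 + q + of_nat d * q * dist_poly d q 1 2"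
    using root_children[OF d] by (subst sum_dist_children) (auto simp: dist_poly_two algebra_simps)
  finally show ?thesis
    by (simp add: first_child_def)
qed

lemma dist_poly_first_child_root_child:
  fixes q :: "'a::comm_ring_1"
  assumes d: "0 < d" and x: "2 \<le> x" "parent d x = 1"
  shows "dist_poly d q x (first_child d 2) = 1 + q + of_nat d * q * dist_poly d q x 2"
proof -
  have "dist_poly d q x 2 = q"
    using x by (simp add: dist_poly_two tree_dist_less)
  moreover have "dist_poly d q x (d + 3) = dist_poly d q x 2 + (\<Sum>c\<in>{2..<d + 3}. q ^ tree_dist d c x)"
    by (rule dist_poly_split) simp_all
  moreover have "(\<Sum>c\<in>{2..<d + 3}. q ^ tree_dist d c x) = 1 + of_nat d * q\<^sup>2"
    using x root_children[OF d] parent_eq_1_iff[OF d, of x] by (subst sum_dist_siblings) auto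
  ultimately show ?thesis
    by (simp add: first_child_def power2_eq_square algebra_simps)
qed

lemma dist_poly_first_child_parent:
  fixes q :: "'a::comm_ring_1"
  assumes d: "0 < d" and g: "2 \<le> parent d x"
    and IH: "dist_poly d q (parent d x) (first_child d (parent d x))
               = 1 + q + of_nat d * q * dist_poly d q (parent d x) (parent d x)"
  shows "dist_poly d q x (first_child d (Suc (parent d x)))
      = 1 + q + of_nat d * q * dist_poly d q x (Suc (parent d x))"
proof -
  define g where "g = parent d x"
  have "3 \<le> x"
    using g parent_eq_1_iff[OF d, of x] by simp
  then have x_block: "x \<in> {first_child d g..<first_child d (Suc g)}"
    using parent_eq_iff[OF d, of x g] by (simp add: g_def)
  have "dist_poly d q x (first_child d (Suc g)) = dist_poly d q x (first_child d g)
      + (\<Sum>c\<in>{first_child d g..<first_child d (Suc g)}. q ^ tree_dist d c x)"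
    using g by (intro dist_poly_split) (simp_all add: first_child_def first_child_Suc g_def)
  also have "dist_poly d q x (first_child d g) = q * (1 + q + of_nat d * q * dist_poly d q g g)"
    using x_block dist_poly_parent[of "first_child d g" x d q] IH by (simp add: g_def)
  also have "(\<Sum>c\<in>{first_child d g..<first_child d (Suc g)}. q ^ tree_dist d c x)
      = 1 + of_nat (d - 1) * q\<^sup>2"
  proof -
    have "2 \<le> c \<and> parent d c = parent d x"
      if "c \<in> {first_child d g..<first_child d (Suc g)}" for c
      using parent_in_block[OF d that] parent_in_block[OF d x_block] by simp
    from sum_dist_siblings[OF finite_atLeastLessThan x_block this] show ?thesis
      using g by (simp add: first_child_Suc g_def)
  qed
  also have "of_nat d * q * dist_poly d q x (Suc g) = of_nat d * q * (q * dist_poly d q g g + q)"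
  proof -
    have "tree_dist d g x = 1"
      using tree_dist_parent[of x d] \<open>3 \<le> x\<close> by (simp add: g_def tree_dist_commute)
    then show ?thesis
      using g x_block less_first_child[OF d, of g] dist_poly_parent[of g x d q]
      by (simp add: dist_poly_Suc g_def)
  qed
  moreover obtain e where "d = Suc e"
    using d by (cases d) auto
  ultimately show ?thesis
    unfolding g_def by (simp add: power2_eq_square algebra_simps)
qed

(* The vertices below first_child d m are 1 and the children of 1, ..., m - 1.  Each child is
   one step further from x than its parent, except on the ancestor chain of x, where the
   corrections telescope to 1 + q; this is the base case m = Suc (parent d x). *)
lemma dist_poly_first_child:
  fixes q :: "'a::comm_ring_1"
  assumes d: "0 < d"
  shows "0 < x \<Longrightarrow> parent d x < m
    \<Longrightarrow> dist_poly d q x (first_child d m) = 1 + q + of_nat d * q * dist_poly d q x m"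
proof (induction x arbitrary: m rule: less_induct)
  case (less x)
  have base: "dist_poly d q x (first_child d (Suc (parent d x)))
      = 1 + q + of_nat d * q * dist_poly d q x (Suc (parent d x))"
  proof -
    consider "x = 1" | "2 \<le> x" "parent d x = 1" | "2 \<le> parent d x"
      using less.prems(1) parent_pos[of d x] by linarith
    then show ?thesis
    proof cases
      case 1
      show ?thesis
        unfolding 1 parent_one Suc_1 by (rule dist_poly_first_child_root[OF d])
    next
      case 2
      then have "Suc (parent d x) = 2" by simp
      show ?thesis
        unfolding \<open>Suc (parent d x) = 2\<close> by (rule dist_poly_first_child_root_child[OF d 2])
    next
      case 3
      then have "2 \<le> x" by (cases "x < 2") (auto simp: parent_def)
      then show ?thesis
        using 3 less.IH[of "parent d x" "parent d x"] parent_less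
        by (intro dist_poly_first_child_parent[OF d]) simp_all
    qed
  qed
  from less.prems(2) have "Suc (parent d x) \<le> m" by simp
  then show ?case
  proof (induction m rule: dec_induct)
    case (step k)
    then have "parent d x < k" by simp
    then show ?case
      using dist_poly_first_child_Suc[OF d less.prems(1)] step.IH by blast
  qed (rule base)
qed

lemma dist_poly_self_root_child:
  fixes q :: "'a::comm_ring_1"
  assumes d: "0 < d" and v: "2 \<le> v" "v \<le> d + 2"
  shows "dist_poly d q v v = q + of_nat (v - 2) * q\<^sup>2"
proof -
  have pv: "parent d v = 1" using parent_eq_1_iff[OF d] v by simp
  have "dist_poly d q 1 v = dist_poly d q 1 2 + (\<Sum>c\<in>{2..<v}. q ^ tree_dist d c 1)"
    using v by (intro dist_poly_split) simp_all
  also have "\<dots> = 1 + of_nat (v - 2) * q"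
    using parent_eq_1_iff[OF d] v by (subst sum_dist_children) (auto simp: dist_poly_two)
  finally show ?thesis
    using dist_poly_parent[of v v d q] pv by (simp add: power2_eq_square algebra_simps)
qed

lemma dist_poly_self_recursion:
  fixes q :: "'a::comm_ring_1"
  assumes d: "0 < d" and v: "d + 3 \<le> v"
  shows "dist_poly d q v v
    = q + of_nat ((v - 3) mod d + 1) * q\<^sup>2 + of_nat d * q\<^sup>2 * dist_poly d q (parent d v) (parent d v)"
proof -
  define p where "p = parent d v"
  have "p \<noteq> 1" using parent_eq_1_iff[OF d, of v] v by (simp add: p_def)
  then have p: "2 \<le> p" using parent_pos[of d v] unfolding p_def by linarith
  have v_eq: "v = first_child d p + (v - 3) mod d"
    using v div_mult_mod_eq[of "v - 3" d] by (simp add: p_def parent_def first_child_def mult.commute)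
  have v_block: "v \<in> {first_child d p..<first_child d (Suc p)}"
    using parent_eq_iff[OF d, of v p] v by (simp add: p_def)
  have "dist_poly d q p v = dist_poly d q p (first_child d p)
      + (\<Sum>c\<in>{first_child d p..<v}. q ^ tree_dist d c p)"
    using v_block less_first_child[OF d, of p] by (intro dist_poly_split) simp_all
  also have "(\<Sum>c\<in>{first_child d p..<v}. q ^ tree_dist d c p) = of_nat ((v - 3) mod d) * q"
  proof -
    have "2 \<le> c \<and> parent d c = p" if "c \<in> {first_child d p..<v}" for c
      using that v_block parent_in_block[OF d, of c p] by simp
    from sum_dist_children[where B = "{first_child d p..<v}", OF finite_atLeastLessThan this]
    have "(\<Sum>c\<in>{first_child d p..<v}. q ^ tree_dist d c p) = of_nat (card {first_child d p..<v}) * q" .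
    also have "card {first_child d p..<v} = (v - 3) mod d"
      using v_eq by simp
    finally show ?thesis .
  qed
  also have "dist_poly d q p (first_child d p) = 1 + q + of_nat d * q * dist_poly d q p p"
    using dist_poly_first_child[OF d, of p p] parent_less[OF p, of d] p by simp
  finally show ?thesis
    using dist_poly_parent[of v v d q] by (simp add: p_def power2_eq_square algebra_simps)
qed

section \<open>The increments in closed form\<close>

lemma pred_mult_geometric_sum: "(d - 1) * (\<Sum>j<k. d ^ j) = d ^ k - (1::nat)"
proof (induction k)
  case (Suc k)
  have "(d - 1) * (\<Sum>j<Suc k. d ^ j) = (d ^ k - 1) + (d - 1) * d ^ k"
    using Suc by (simp add: algebra_simps)
  also have "\<dots> = d ^ Suc k - 1"
  proof (cases d)
    case 0
    then show ?thesis by (cases k) simp_all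
  next
    case (Suc e)
    then have "1 \<le> d ^ k" by simp
    then show ?thesis using Suc by simp
  qed
  finally show ?case .
qed simp

lemma geometric_quotient: "2 \<le> d \<Longrightarrow> (d ^ k - 1) div (d - 1) = (\<Sum>j<k. d ^ j :: nat)"
  using pred_mult_geometric_sum[of d k, symmetric] by simp

lemma nk_eq_sum: "2 \<le> d \<Longrightarrow> nk d k = 2 + (d + 1) * (\<Sum>j<k. d ^ j)"
  unfolding nk_def using geometric_quotient[of d k] by simp

lemma mk_eq_sum: "2 \<le> d \<Longrightarrow> mk d k = 3 + 2 * d * (\<Sum>j<k. d ^ j)"
  unfolding mk_def using geometric_quotient[of d k] by simp

lemma sum_power_Suc: "(\<Sum>j<Suc k. d ^ j) = d * (\<Sum>j<k. d ^ j) + (1::nat)"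
  by (subst sum.lessThan_Suc_shift) (simp add: sum_distrib_left)

lemma nk_0 [simp]: "nk d 0 = 2" and mk_0 [simp]: "mk d 0 = 3"
  by (simp_all add: nk_def mk_def)

lemma nk_Suc:
  assumes "2 \<le> d"
  shows "nk d (Suc k) = first_child d (nk d k)"
proof -
  have "nk d (Suc k) = 2 + (d + 1) * (d * (\<Sum>j<k. d ^ j) + 1)"
    using nk_eq_sum[OF assms, of "Suc k"] unfolding sum_power_Suc .
  then show ?thesis
    using nk_eq_sum[OF assms, of k] by (simp add: first_child_def algebra_simps)
qed

lemma mk_Suc:
  assumes "2 \<le> d"
  shows "mk d (Suc k) = first_child d (mk d k)"
proof -
  have "mk d (Suc k) = 3 + 2 * d * (d * (\<Sum>j<k. d ^ j) + 1)"
    using mk_eq_sum[OF assms, of "Suc k"] unfolding sum_power_Suc .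
  then show ?thesis
    using mk_eq_sum[OF assms, of k] by (simp add: first_child_def algebra_simps)
qed

lemma nk_Suc_eq_add: "2 \<le> d \<Longrightarrow> nk d (Suc k) = nk d k + (d + 1) * d ^ k"
  by (simp add: nk_eq_sum algebra_simps)

lemma nk_ge_2: "2 \<le> nk d k" and mk_ge_3: "3 \<le> mk d k"
  by (simp_all add: nk_def mk_def)

lemma mk_eq_nk_add: "2 \<le> d \<Longrightarrow> mk d k = nk d k + d ^ k"
proof (induction k)
  case (Suc k)
  then have "mk d k - 1 = (nk d k - 1) + d ^ k"
    using nk_ge_2[of d k] by simp
  then show ?case
    using Suc.prems by (simp add: nk_Suc mk_Suc first_child_def algebra_simps)
qed simp

lemma nk_mono: "2 \<le> d \<Longrightarrow> i \<le> k \<Longrightarrow> nk d i \<le> nk d k"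
  by (rule lift_Suc_mono_le[of "nk d"]) (simp_all add: nk_Suc_eq_add)

lemma mk_less_nk_Suc: "2 \<le> d \<Longrightarrow> mk d i < nk d (Suc i)"
  by (simp add: mk_eq_nk_add nk_Suc_eq_add)

definition odd_term :: "nat \<Rightarrow> 'a::comm_ring_1 \<Rightarrow> nat \<Rightarrow> nat \<Rightarrow> 'a" where
  "odd_term d q i v = (if nk d i \<le> v then of_nat (d ^ i) * q ^ (2 * i + 1) else 0)"

definition even_term :: "nat \<Rightarrow> 'a::comm_ring_1 \<Rightarrow> nat \<Rightarrow> nat \<Rightarrow> 'a" where
  "even_term d q i v =
     (if mk d i \<le> v then of_nat (d ^ i * ((v - mk d i) div d ^ i mod d + 1)) * q ^ (2 * i + 2) else 0)"

definition increment_poly :: "nat \<Rightarrow> 'a::comm_ring_1 \<Rightarrow> nat \<Rightarrow> nat \<Rightarrow> 'a" where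
  "increment_poly d q N v = (\<Sum>i<N. odd_term d q i v + even_term d q i v)"

lemma odd_term_Suc:
  assumes d: "2 \<le> d" and v: "d + 3 \<le> v"
  shows "odd_term d q (Suc i) v = of_nat d * q\<^sup>2 * odd_term d q i (parent d v)"
proof -
  have "nk d (Suc i) \<le> v \<longleftrightarrow> nk d i \<le> parent d v"
    using first_child_le_iff[of d v "nk d i"] nk_ge_2[of d i] d v by (simp add: nk_Suc)
  then show ?thesis
    by (simp add: odd_term_def power_add power_mult power2_eq_square algebra_simps)
qed

lemma even_term_Suc:
  assumes d: "2 \<le> d" and v: "d + 3 \<le> v"
  shows "even_term d q (Suc i) v = of_nat d * q\<^sup>2 * even_term d q i (parent d v)"
proof -
  have le_iff: "mk d (Suc i) \<le> v \<longleftrightarrow> mk d i \<le> parent d v"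
    using first_child_le_iff[of d v "mk d i"] mk_ge_3[of d i] d v by (simp add: mk_Suc)
  show ?thesis
  proof (cases "mk d (Suc i) \<le> v")
    case True
    have "(v - mk d (Suc i)) div d ^ Suc i = (v - mk d (Suc i)) div d div d ^ i"
      by (simp add: div_mult2_eq)
    also have "\<dots> = (parent d v - mk d i) div d ^ i"
      using True d mk_ge_3[of d i] by (simp add: mk_Suc diff_first_child_div)
    finally show ?thesis
      using True le_iff by (simp add: even_term_def power_add power_mult power2_eq_square algebra_simps)
  qed (use le_iff in \<open>simp add: even_term_def\<close>)
qed

lemma increment_poly_Suc:
  fixes q :: "'a::comm_ring_1"
  assumes d: "2 \<le> d" and v: "d + 3 \<le> v"
  shows "increment_poly d q (Suc N) v
    = q + of_nat ((v - 3) mod d + 1) * q\<^sup>2 + of_nat d * q\<^sup>2 * increment_poly d q N (parent d v)"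
proof -
  have "odd_term d q 0 v + even_term d q 0 v = q + of_nat ((v - 3) mod d + 1) * q\<^sup>2"
    using v by (simp add: odd_term_def even_term_def power2_eq_square)
  then show ?thesis
    unfolding increment_poly_def sum.lessThan_Suc_shift
    by (simp add: odd_term_Suc[OF assms] even_term_Suc[OF assms] sum_distrib_left algebra_simps)
qed

lemma increment_poly_root_child:
  fixes q :: "'a::comm_ring_1"
  assumes d: "2 \<le> d" and v: "2 \<le> v" "v \<le> d + 2"
  shows "increment_poly d q (Suc N) v = q + of_nat (v - 2) * q\<^sup>2"
proof -
  have "odd_term d q (Suc i) v = 0" "even_term d q (Suc i) v = 0" for i
    using first_child_ge[OF nk_ge_2[of d i], of d] first_child_ge[of "mk d i" d] mk_ge_3[of d i] v d
    by (simp_all add: odd_term_def even_term_def nk_Suc mk_Suc)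
  moreover have "odd_term d q 0 v + even_term d q 0 v = q + of_nat (v - 2) * q\<^sup>2"
    using v d by (cases "v = 2") (simp_all add: odd_term_def even_term_def power2_eq_square)
  ultimately show ?thesis
    unfolding increment_poly_def sum.lessThan_Suc_shift by simp
qed

lemma dist_poly_self_eq_increment_poly:
  fixes q :: "'a::comm_ring_1"
  assumes d: "2 \<le> d"
  shows "0 < v \<Longrightarrow> v < nk d N \<Longrightarrow> dist_poly d q v v = increment_poly d q N v"
proof (induction v arbitrary: N rule: less_induct)
  case (less v)
  consider "v = 1" | "2 \<le> v" "v \<le> d + 2" | "d + 3 \<le> v"
    using less.prems(1) by linarith
  then show ?case
  proof cases
    case 1
    have "odd_term d q i 1 = 0" "even_term d q i 1 = 0" for i
      using nk_ge_2[of d i] mk_ge_3[of d i] by (auto simp: odd_term_def even_term_def)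
    with 1 show ?thesis
      by (simp add: dist_poly_def increment_poly_def)
  next
    case 2
    then obtain N' where "N = Suc N'"
      using less.prems(2) by (cases N) auto
    then show ?thesis
      using 2 d by (simp add: dist_poly_self_root_child increment_poly_root_child)
  next
    case 3
    then obtain N' where N: "N = Suc N'"
      using less.prems(2) by (cases N) auto
    have "parent d v < nk d N'"
      using less.prems(2) first_child_le_iff[of d v "nk d N'"] nk_ge_2[of d N'] 3 d
      by (simp add: N nk_Suc not_le)
    then have "dist_poly d q (parent d v) (parent d v) = increment_poly d q N' (parent d v)"
      using less.IH[of "parent d v"] parent_less[of v d] 3 by simp
    then show ?thesis
      using 3 d by (simp add: N dist_poly_self_recursion increment_poly_Suc)
  qed
qed

section \<open>Digit sums and labels\<close>

lemma sum_block_div: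
  assumes "s \<le> e"
  shows "(\<Sum>x\<in>{m * e..<m * e + s}. f (x div e)) = s * (f m :: nat)"
proof -
  have "x div e = m" if "x \<in> {m * e..<m * e + s}" for x
    using that assms by (intro div_nat_eqI) (auto simp: mult.commute)
  then show ?thesis by simp
qed

lemma sum_blocks_div: "(\<Sum>x<m * e. f (x div e)) = e * (\<Sum>j<m. f j :: nat)"
  using sum.nat_group[of "\<lambda>x. f (x div e)" e m]
  by (simp add: sum_block_div sum_distrib_left)

lemma sum_block_mod:
  fixes d :: nat
  assumes "l \<le> d"
  shows "(\<Sum>j\<in>{a * d..<a * d + l}. g (j mod d)) = (\<Sum>t<l. g t :: nat)"
proof -
  have "(\<Sum>j\<in>{a * d..<a * d + l}. g (j mod d)) = (\<Sum>t\<in>{0..<l}. g ((t + a * d) mod d))"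
    using sum.shift_bounds_nat_ivl[of "\<lambda>j. g (j mod d)" 0 "a * d" l] by (simp add: add.commute)
  also have "\<dots> = (\<Sum>t<l. g t)"
    using assms by (intro sum.cong) auto
  finally show ?thesis .
qed

lemma sum_blocks_mod: "(\<Sum>j<a * d. g (j mod d)) = a * (\<Sum>t<d. g t :: nat)"
  using sum.nat_group[of "\<lambda>j. g (j mod d)" d a] by (simp add: sum_block_mod)

lemma sum_lessThan_add:
  fixes a b :: nat
  shows "(\<Sum>x<a + b. f x) = (\<Sum>x<a. f x) + (\<Sum>x\<in>{a..<a + b}. f x)"
proof -
  have "{..<a + b} = {..<a} \<union> {a..<a + b}" by auto
  then show ?thesis by (simp add: sum.union_disjoint ivl_disj_int)
qed

lemma sum_Suc_eq_choose_two: "(\<Sum>t<l. Suc t) = Suc l choose 2"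
  by (induction l) (simp_all add: numeral_2_eq_2)

lemma sum_digit_Suc:
  fixes e d X :: nat
  assumes e: "0 < e" and d: "0 < d"
  shows "(\<Sum>x\<le>X. Suc (x div e mod d)) = e * (X div (d * e)) * (Suc d choose 2)
    + e * (Suc (X div e mod d) choose 2) + Suc (X div e mod d) * Suc (X mod e)"
proof -
  define Q where "Q = X div e"
  define l where "l = Q mod d"
  have X: "{..X} = {..<Q * e + Suc (X mod e)}"
    using div_mult_mod_eq[of X e] by (auto simp: Q_def)
  have "(\<Sum>j<Q. Suc (j mod d)) = (\<Sum>j<Q div d * d + l. Suc (j mod d))"
    by (simp add: l_def)
  also have "\<dots> = Q div d * (\<Sum>t<d. Suc t) + (\<Sum>t<l. Suc t)"
    using d by (simp only: sum_lessThan_add sum_blocks_mod sum_block_mod l_def mod_le_divisor)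
  also have "\<dots> = Q div d * (Suc d choose 2) + (Suc l choose 2)"
    by (simp only: sum_Suc_eq_choose_two)
  finally have "(\<Sum>j<Q. Suc (j mod d)) = Q div d * (Suc d choose 2) + (Suc l choose 2)" .
  moreover have "(\<Sum>x<Q * e + Suc (X mod e). Suc (x div e mod d))
      = e * (\<Sum>j<Q. Suc (j mod d)) + Suc (X mod e) * Suc (Q mod d)"
  proof -
    have "Suc (X mod e) \<le> e" using e by (simp add: Suc_leI)
    then show ?thesis
      by (simp only: sum_lessThan_add sum_blocks_div[where f = "\<lambda>j. Suc (j mod d)"]
          sum_block_div[where f = "\<lambda>j. Suc (j mod d)"])
  qed
  moreover have "X div (d * e) = Q div d"
    by (simp add: Q_def div_mult2_eq[symmetric] mult.commute)
  ultimately show ?thesis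
    unfolding X by (simp add: Q_def l_def algebra_simps)
qed

lemma sum_digits_eq_mod: "(\<Sum>j<i. x div d ^ j mod d * d ^ j) = x mod (d::nat) ^ i"
proof (induction i)
  case (Suc i)
  then show ?case
    using mod_mult2_eq[of x "d ^ i" d] by (simp add: mult.commute)
qed simp

lemma digit_eq_if_mod_eq:
  fixes d :: nat
  assumes "0 < d" "x mod d ^ Suc i = y mod d ^ Suc i"
  shows "x div d ^ i mod d = y div d ^ i mod d"
proof -
  have digit: "z div d ^ i mod d = z mod d ^ Suc i div d ^ i" for z
    using mod_mult2_eq[of z "d ^ i" d] assms(1) by (simp add: mult.commute)
  show ?thesis
    using assms(2) by (simp only: digit)
qed

lemma power_dvd_label_offset:
  assumes d: "2 \<le> d" and ik: "i \<le> k"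
  shows "int (d ^ Suc i) dvd int (mk d i) - int (nk d k) + int ((d - 1) * d ^ k)"
  using ik
proof (induction k rule: dec_induct)
  case base
  have "int (mk d i) - int (nk d i) + int ((d - 1) * d ^ i) = int (d ^ Suc i)"
    using d by (simp add: mk_eq_nk_add of_nat_diff algebra_simps)
  then show ?case by simp
next
  case (step k)
  have eq: "int (mk d i) - int (nk d (Suc k)) + int ((d - 1) * d ^ Suc k)
      = (int (mk d i) - int (nk d k) + int ((d - 1) * d ^ k)) + int (d ^ Suc k) * (int d - 3)"
    using d by (simp add: nk_Suc_eq_add of_nat_diff algebra_simps)
  have "int (d ^ Suc i) dvd int (d ^ Suc k) * (int d - 3)"
    using step.hyps(1) by (simp add: le_imp_power_dvd)
  then show ?case
    unfolding eq by (rule dvd_add[OF step.IH])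
qed

lemma label_value_mod:
  assumes d: "2 \<le> d" and ik: "i \<le> k" and n: "nk d k \<le> n" "mk d i \<le> n"
  shows "(n - nk d k + (d - 1) * d ^ k) mod d ^ Suc i = (n - mk d i) mod d ^ Suc i"
proof -
  have diff: "int (n - nk d k + (d - 1) * d ^ k) - int (n - mk d i)
      = int (mk d i) - int (nk d k) + int ((d - 1) * d ^ k)"
    using n by (simp add: of_nat_diff)
  have "int (d ^ Suc i) dvd int (n - nk d k + (d - 1) * d ^ k) - int (n - mk d i)"
    unfolding diff by (rule power_dvd_label_offset[OF d ik])
  then have "int (n - nk d k + (d - 1) * d ^ k) mod int (d ^ Suc i) = int (n - mk d i) mod int (d ^ Suc i)"
    by (simp only: mod_eq_dvd_iff)
  then show ?thesis
    by (simp only: of_nat_mod[symmetric] of_nat_eq_iff)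
qed

lemma label_digit_eq:
  assumes "2 \<le> d" "i \<le> k" "nk d k \<le> n" "mk d i \<le> n"
  shows "label_digit d k n i = (n - mk d i) div d ^ i mod d"
  using digit_eq_if_mod_eq[OF _ label_value_mod[OF assms]] assms(1) by (simp add: label_digit_def)

lemma label_low_eq:
  assumes "2 \<le> d" "i \<le> k" "nk d k \<le> n" "mk d i \<le> n"
  shows "label_low d k n i = (n - mk d i) mod d ^ i"
proof -
  have dvd: "d ^ i dvd d ^ Suc i" by simp
  have "(n - nk d k + (d - 1) * d ^ k) mod d ^ i = (n - nk d k + (d - 1) * d ^ k) mod d ^ Suc i mod d ^ i"
    by (rule mod_mod_cancel[OF dvd, symmetric])
  also have "\<dots> = (n - mk d i) mod d ^ i"
    unfolding label_value_mod[OF assms] by (rule mod_mod_cancel[OF dvd])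
  finally show ?thesis
    by (simp add: label_low_def label_digit_def sum_digits_eq_mod)
qed

section \<open>Summation over the vertices\<close>

lemma wiener_dendrimer:
  assumes "0 < d"
  shows "wiener n (dend_edges d n) q = (\<Sum>v\<in>{1..n}. dist_poly d q v v)"
proof -
  have "wiener n (dend_edges d n) q = (\<Sum>u\<in>{1..n}. \<Sum>v\<in>{v \<in> {1..n}. u < v}. q ^ tree_dist d u v)"
    unfolding wiener_def dend_edges_eq_parent_edges[OF assms]
    by (intro sum.cong) (auto simp: gdist_parent_edges)
  also have "\<dots> = (\<Sum>v\<in>{1..n}. \<Sum>u\<in>{u \<in> {1..n}. u < v}. q ^ tree_dist d u v)"
    by (rule sum.swap_restrict) simp_all
  also have "\<dots> = (\<Sum>v\<in>{1..n}. dist_poly d q v v)"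
    unfolding dist_poly_def by (intro sum.cong) auto
  finally show ?thesis .
qed

lemma sum_odd_term:
  assumes "nk d i \<le> n"
  shows "(\<Sum>v\<in>{1..n}. odd_term d q i v) = of_nat (d ^ i * (n - nk d i + 1)) * q ^ (2 * i + 1)"
proof -
  have "{v \<in> {1..n}. nk d i \<le> v} = {nk d i..n}"
    using nk_ge_2[of d i] by auto
  then have "(\<Sum>v\<in>{1..n}. odd_term d q i v) = (\<Sum>v\<in>{nk d i..n}. of_nat (d ^ i) * q ^ (2 * i + 1))"
    unfolding odd_term_def by (simp add: sum.inter_filter[symmetric])
  also have "\<dots> = of_nat (n - nk d i + 1) * (of_nat (d ^ i) * q ^ (2 * i + 1))"
    using assms by (simp add: Suc_diff_le)
  finally show ?thesis
    by (simp only: of_nat_mult ac_simps)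
qed

lemma sum_even_term:
  assumes "mk d i \<le> n"
  shows "(\<Sum>v\<in>{1..n}. even_term d q i v)
    = of_nat (d ^ i * (\<Sum>x\<le>n - mk d i. Suc (x div d ^ i mod d))) * q ^ (2 * i + 2)"
proof -
  have "{v \<in> {1..n}. mk d i \<le> v} = {mk d i..n}"
    using mk_ge_3[of d i] by auto
  then have "(\<Sum>v\<in>{1..n}. even_term d q i v)
      = (\<Sum>v\<in>{mk d i..n}. of_nat (d ^ i * Suc ((v - mk d i) div d ^ i mod d)) * q ^ (2 * i + 2))"
    unfolding even_term_def by (simp add: sum.inter_filter[symmetric])
  also have "\<dots> = (\<Sum>x\<le>n - mk d i. of_nat (d ^ i * Suc (x div d ^ i mod d)) * q ^ (2 * i + 2))"
    using assms sum.shift_bounds_cl_nat_ivl[of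
        "\<lambda>v. of_nat (d ^ i * Suc ((v - mk d i) div d ^ i mod d)) * q ^ (2 * i + 2)" 0 "mk d i" "n - mk d i"]
    by (simp add: atMost_atLeast0)
  finally show ?thesis
    by (simp add: sum_distrib_left sum_distrib_right)
qed

lemma sum_even_term_label:
  fixes q :: "'a::comm_ring_1"
  assumes d: "2 \<le> d" and label: "i \<le> k" "nk d k \<le> n" and n: "mk d i \<le> n"
  shows "(\<Sum>v\<in>{1..n}. even_term d q i v) =
       of_int ( int (d ^ (2 * i)) * ((int n - int (mk d i)) div int (d ^ (i + 1))) * int ((d + 1) choose 2)
              + int (d ^ (2 * i) * ((label_digit d k n i + 1) choose 2))
              + int (d ^ i * (label_digit d k n i + 1) * (label_low d k n i + 1)))
       * q ^ (2 * i + 2)"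
proof -
  define X where "X = n - mk d i"
  have "(int n - int (mk d i)) div int (d ^ (i + 1)) = int (X div (d * d ^ i))"
    using n by (simp add: X_def of_nat_diff zdiv_int)
  moreover have "d ^ (2 * i) = d ^ i * d ^ i"
    by (simp add: mult_2 power_add)
  moreover have "label_digit d k n i = X div d ^ i mod d" "label_low d k n i = X mod d ^ i"
    using label_digit_eq[OF d label n] label_low_eq[OF d label n] by (simp_all add: X_def)
  moreover have "0 < d ^ i" "0 < d" using d by simp_all
  ultimately show ?thesis
    unfolding sum_even_term[OF n] X_def[symmetric] by (simp add: sum_digit_Suc algebra_simps)
qed

theorem theorem2p2:
  fixes d n k :: nat and q :: "'a::comm_ring_1"
  assumes "d \<ge> 2" and "n \<ge> 2" and "nk d k \<le> n" and "n < nk d (Suc k)"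
  shows "wiener n (dend_edges d n) q =
    (\<Sum>i\<le>k. of_nat (d ^ i * (n - nk d i + 1)) * q ^ (2 * i + 1))
  + (\<Sum>i<(if n < mk d k then k else Suc k).
       of_int ( int (d ^ (2 * i)) * ((int n - int (mk d i)) div int (d ^ (i + 1))) * int ((d + 1) choose 2)
              + int (d ^ (2 * i) * ((label_digit d k n i + 1) choose 2))
              + int (d ^ i * (label_digit d k n i + 1) * (label_low d k n i + 1)))
       * q ^ (2 * i + 2))"
proof -
  define k' where "k' = (if n < mk d k then k else Suc k)"
  have odd_range: "nk d i \<le> n" if "i \<le> k" for i
    using nk_mono[OF assms(1) that] assms(3) by simp
  have even_range: "i \<le> k \<and> mk d i \<le> n" if "i < k'" for i
    using that mk_less_nk_Suc[OF assms(1), of i] odd_range[of "Suc i"]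
    by (cases "i = k") (auto simp: k'_def split: if_splits)
  have "wiener n (dend_edges d n) q = (\<Sum>v\<in>{1..n}. increment_poly d q (Suc k) v)"
    using assms(1,4) wiener_dendrimer[of d n q]
    by (auto intro!: sum.cong dist_poly_self_eq_increment_poly)
  also have "\<dots> = (\<Sum>i\<le>k. \<Sum>v\<in>{1..n}. odd_term d q i v) + (\<Sum>i<Suc k. \<Sum>v\<in>{1..n}. even_term d q i v)"
    unfolding increment_poly_def sum.distrib lessThan_Suc_atMost[symmetric]
    by (simp only: sum.swap[where A = "{1..n}"])
  also have "(\<Sum>i<Suc k. \<Sum>v\<in>{1..n}. even_term d q i v) = (\<Sum>i<k'. \<Sum>v\<in>{1..n}. even_term d q i v)"
    by (auto simp: k'_def even_term_def)
  finally have W: "wiener n (dend_edges d n) q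
      = (\<Sum>i\<le>k. \<Sum>v\<in>{1..n}. odd_term d q i v) + (\<Sum>i<k'. \<Sum>v\<in>{1..n}. even_term d q i v)" .
  show ?thesis
    unfolding W k'_def[symmetric] using odd_range even_range assms(1,3)
    by (intro arg_cong2[where f = "(+)"] sum.cong refl sum_odd_term sum_even_term_label) auto
qed

end
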